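(* For every $n\ge1$ and every $\ell>0$, the maps $(\phi,\gamma)\mapsto\gamma\circ\phi$ give homeomorphisms \[ \mathcal G(\ell,n)\times N_n\cong\mathbb P^\ell_{0_n,1_n}\mathbb M^{\mathcal G}(|\square[n]|^t_{reg}),\qquad \mathcal G(\ell,n)\times\partial N_n\cong\mathbb P^\ell_{0_n,1_n}\mathbb M^{\mathcal G}(|\partial\square[n]|^t_{reg}). \] In particular, for $\ell=1$, $\mathcal G(1,n)\times N_n\cong\mathbb P^{top}_{0_n,1_n}|\square[n]|^t_{reg}$ and $\mathcal G(1,n)\times\partial N_n\cong\mathbb P^{top}_{0_n,1_n}|\partial\square[n]|^t_{reg}$ (for $n=1$ both sides of the boundary statement are empty).
   Context: $\mathbf{Top}$: $\Delta$-generated spaces; mapping spaces carry the $\Delta$-kelleyfication of the compact-open topology, subspaces the $\Delta$-kelleyfication of the relative topology. Precubical sets are presheaves on the box category $\square$; $\square[n]$ is representable, $\partial\square[n]$ its sub-presheaf of cubes of dimension $\le n-1$; $|K|_{geom}=\mathrm{colim}_{\square[n]\to K}[0,1]^n$, so $|\partial\square[n]|_{geom}$ is the boundary of $[0,1]^n$. $0_n=(0,\dots,0)$, $1_n=(1,\dots,1)$. A $d$-path of $[0,1]^n$ is a continuous map $[0,\ell]\to[0,1]^n$ nondecreasing in each coordinate; a $d$-path of $K$ is a Moore composition of images of $d$-paths of cubes under the maps $|c|_{geom}$, tame if the pieces can be chosen with endpoints at vertices. Regular: constant on no nondegenerate interval. $L_1$-arc length: $\sum_i|\gamma_i(t')-\gamma_i(t)|$,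 additive. A $d$-path of length $n$ is natural if the $L_1$-arc length of $\gamma|_{[0,t]}$ equals $t$. $N_n$ (resp. $\partial N_n$) is the space of tame natural $d$-paths $[0,n]\to[0,1]^n$ (resp. with image in $|\partial\square[n]|_{geom}$) from $0_n$ to $1_n$. $\mathcal G(\ell,n)$: nondecreasing homeomorphisms $[0,\ell]\to[0,n]$. Multipointed $d$-spaces $(|X|,X^0,\mathbb P^{top}X)$; $|K|^t_{reg}$ has underlying space $|K|_{geom}$, states $K_0$, execution paths the nonconstant tame regular $d$-paths $[0,1]\to|K|_{geom}$ between vertices. $\mathbb M^{\mathcal G}(X)$ is the Moore flow with $\mathbb P^\ell_{\alpha,\beta}\mathbb M^{\mathcal G}(X)=\{\gamma(t/\ell)\mid\gamma\in\mathbb P^{top}_{\alpha,\beta}X\}\subset\mathbf{TOP}([0,\ell],|X|)$. *)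

theory Defs
  imports "HOL-Analysis.Analysis" "HOL-Homology.Homology"
begin

abbreviation simplex_top :: "nat \<Rightarrow> (nat \<Rightarrow> real) topology" where
  "simplex_top p \<equiv> subtopology (powertop_real UNIV) (standard_simplex p)"

definition kdelta :: "'a topology \<Rightarrow> 'a topology" where
  "kdelta X = topology (\<lambda>U. U \<subseteq> topspace X \<and>
     (\<forall>p f. continuous_map (simplex_top p) X f \<longrightarrow>
        openin (simplex_top p) {x \<in> standard_simplex p. f x \<in> U}))"

text \<open>Continuous maps X -> Y, represented extensionally (undefined outside the
  underlying set of X).\<close>
definition cmaps :: "'a topology \<Rightarrow> 'b topology \<Rightarrow> ('a \<Rightarrow> 'b) set" where
  "cmaps X Y = {f. continuous_map X Y f \<and> f \<in> extensional (topspace X)}"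

definition compact_open :: "'a topology \<Rightarrow> 'b topology \<Rightarrow> ('a \<Rightarrow> 'b) topology" where
  "compact_open X Y = topology_generated_by
     (insert (cmaps X Y)
        {{f \<in> cmaps X Y. f ` K \<subseteq> U} | K U. compactin X K \<and> openin Y U})"

definition TOP :: "'a topology \<Rightarrow> 'b topology \<Rightarrow> ('a \<Rightarrow> 'b) topology" where
  "TOP X Y = kdelta (compact_open X Y)"

definition ksub :: "'a topology \<Rightarrow> 'a set \<Rightarrow> 'a topology" where
  "ksub X S = kdelta (subtopology X S)"

text \<open>Binary product in the category of Delta-generated spaces.\<close>
definition kprod :: "'a topology \<Rightarrow> 'b topology \<Rightarrow> ('a \<times> 'b) topology" where
  "kprod X Y = kdelta (prod_topology X Y)"

definition unit_cube :: "(real^'n::finite) set" where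
  "unit_cube = {x. \<forall>i. 0 \<le> x$i \<and> x$i \<le> 1}"

definition cube_boundary :: "(real^'n::finite) set" where
  "cube_boundary = {x \<in> unit_cube. \<exists>i. x$i = 0 \<or> x$i = 1}"

definition cube_vertices :: "(real^'n::finite) set" where
  "cube_vertices = {x. \<forall>i. x$i = 0 \<or> x$i = 1}"

text \<open>Images |c|_geom of the cubes c of dimension at most d of the precubical set
  square[n]: the faces of [0,1]^n obtained by freezing the coordinates in I to the
  values e i in {0,1}, with at most d free coordinates.  square[n] corresponds to
  d = n, its boundary to d = n - 1.\<close>
definition cube_faces :: "nat \<Rightarrow> (real^'n::finite) set set" where
  "cube_faces d = {{x \<in> unit_cube. \<forall>i\<in>I. x$i = e i} | I e.
      (\<forall>i\<in>I. e i = 0 \<or> e i = 1) \<and> card (UNIV - I) \<le> d}"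

definition cube_dpath :: "real \<Rightarrow> (real \<Rightarrow> real^'n::finite) \<Rightarrow> bool" where
  "cube_dpath l \<gamma> \<longleftrightarrow> continuous_on {0..l} \<gamma> \<and> \<gamma> ` {0..l} \<subseteq> unit_cube \<and>
     (\<forall>s t i. 0 \<le> s \<and> s \<le> t \<and> t \<le> l \<longrightarrow> \<gamma> s $ i \<le> \<gamma> t $ i)"

text \<open>Tame d-paths [0,l] of the precubical set consisting of the cubes of square[n]
  of dimension at most d: Moore compositions of d-paths of cubes of that set with
  endpoints of the pieces at vertices.\<close>
definition tame_dpath :: "nat \<Rightarrow> real \<Rightarrow> (real \<Rightarrow> real^'n::finite) \<Rightarrow> bool" where
  "tame_dpath d l \<gamma> \<longleftrightarrow> cube_dpath l \<gamma> \<and>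
     (\<exists>(k::nat) t. t 0 = 0 \<and> t k = l \<and> (\<forall>j<k. t j \<le> t (Suc j)) \<and>
        (\<forall>j\<le>k. \<gamma> (t j) \<in> cube_vertices) \<and>
        (\<forall>j<k. \<exists>F \<in> cube_faces d. \<gamma> ` {t j..t (Suc j)} \<subseteq> F))"

definition regular_path :: "real \<Rightarrow> (real \<Rightarrow> 'a) \<Rightarrow> bool" where
  "regular_path l \<gamma> \<longleftrightarrow> (\<forall>a b. 0 \<le> a \<and> a < b \<and> b \<le> l \<longrightarrow> (\<exists>t\<in>{a..b}. \<gamma> t \<noteq> \<gamma> a))"

text \<open>Natural: the L1 arc length of the restriction to [0,t] equals t.\<close>
definition natural_path :: "real \<Rightarrow> (real \<Rightarrow> real^'n::finite) \<Rightarrow> bool" where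
  "natural_path l \<gamma> \<longleftrightarrow> (\<forall>t\<in>{0..l}. (\<Sum>i\<in>UNIV. \<bar>\<gamma> t $ i - \<gamma> 0 $ i\<bar>) = t)"

abbreviation dimc :: "'n::finite itself \<Rightarrow> nat" where
  "dimc _ \<equiv> CARD('n)"

text \<open>Underlying sets of N_n (d = n) and of the boundary version (d = n - 1),
  as extensional maps on [0,n].\<close>
definition Nset :: "nat \<Rightarrow> (real \<Rightarrow> real^'n::finite) set" where
  "Nset d = {\<gamma> \<in> extensional {0..real CARD('n)}.
      tame_dpath d (real CARD('n)) \<gamma> \<and> natural_path (real CARD('n)) \<gamma> \<and>
      \<gamma> 0 = vec 0 \<and> \<gamma> (real CARD('n)) = vec 1}"

definition Ntop :: "nat \<Rightarrow> (real \<Rightarrow> real^'n::finite) topology" where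
  "Ntop d = ksub (TOP (top_of_set {0..real CARD('n)}) (top_of_set unit_cube)) (Nset d)"

definition Gset :: "real \<Rightarrow> nat \<Rightarrow> (real \<Rightarrow> real) set" where
  "Gset l n = {\<phi> \<in> extensional {0..l}.
      homeomorphic_map (top_of_set {0..l}) (top_of_set {0..real n}) \<phi> \<and> mono_on {0..l} \<phi>}"

definition Gtop :: "real \<Rightarrow> nat \<Rightarrow> (real \<Rightarrow> real) topology" where
  "Gtop l n = ksub (TOP (top_of_set {0..l}) (top_of_set {0..real n})) (Gset l n)"

text \<open>Execution paths of |K|^t_reg from 0_n to 1_n: nonconstant tame regular
  d-paths [0,1] -> |K|_geom (here K = cubes of square[n] of dimension at most d).\<close>
definition exec_paths :: "nat \<Rightarrow> (real \<Rightarrow> real^'n::finite) set" where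
  "exec_paths d = {\<gamma>. tame_dpath d 1 \<gamma> \<and> regular_path 1 \<gamma> \<and>
      (\<exists>s t. 0 \<le> s \<and> s \<le> 1 \<and> 0 \<le> t \<and> t \<le> 1 \<and> \<gamma> s \<noteq> \<gamma> t) \<and>
      \<gamma> 0 = vec 0 \<and> \<gamma> 1 = vec 1}"

text \<open>P^l_{0_n,1_n} M^G(|K|^t_reg) as a subset of TOP([0,l],|K|_geom).\<close>
definition Pset :: "real \<Rightarrow> nat \<Rightarrow> (real \<Rightarrow> real^'n::finite) set" where
  "Pset l d = {restrict (\<lambda>t. \<gamma> (t / l)) {0..l} | \<gamma>. \<gamma> \<in> exec_paths d}"

definition Ptop :: "real \<Rightarrow> nat \<Rightarrow> (real^'n::finite) set \<Rightarrow> (real \<Rightarrow> real^'n) topology" where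
  "Ptop l d K = ksub (TOP (top_of_set {0..l}) (top_of_set K)) (Pset l d)"

text \<open>P^top_{0_n,1_n} |K|^t_reg as a subset of TOP([0,1],|K|_geom).\<close>
definition PtopSet :: "nat \<Rightarrow> (real \<Rightarrow> real^'n::finite) set" where
  "PtopSet d = {restrict \<gamma> {0..1} | \<gamma>. \<gamma> \<in> exec_paths d}"

definition PtopTop :: "nat \<Rightarrow> (real^'n::finite) set \<Rightarrow> (real \<Rightarrow> real^'n) topology" where
  "PtopTop d K = ksub (TOP (top_of_set {0..1}) (top_of_set K)) (PtopSet d)"

definition reparam :: "real \<Rightarrow> (real \<Rightarrow> real) \<times> (real \<Rightarrow> 'a) \<Rightarrow> (real \<Rightarrow> 'a)" where
  "reparam l = (\<lambda>(\<phi>, \<gamma>). restrict (\<gamma> \<circ> \<phi>) {0..l})"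

end

theory Submission
  imports Defs
begin

text \<open>
  An execution path p of the cube from 0 to 1 is nondecreasing in every coordinate, so its
  L1 arc length from the origin is the coordinate sum \<sigma> \<circ> p, and regularity makes this
  strictly increasing.  Thus \<phi> = \<sigma> \<circ> p is an increasing homeomorphism [0,l] \<cong> [0,n],
  \<gamma> = p \<circ> \<phi>\<inverse> is a natural path and p = \<gamma> \<circ> \<phi>; this inverts (\<phi>, \<gamma>) \<mapsto> \<gamma> \<circ> \<phi>.
  Tameness survives both reparametrisations because a subdivision can be transported along
  an increasing homeomorphism.

  Continuity into and out of Delta-kelleyfied spaces only has to be tested on singular
  simplices, which are compact Hausdorff.  Over such a base Z the fibrewise map
  (z, s) \<mapsto> (z, \<sigma> (p z s)) is a continuous bijection Z \<times> [0,l] \<rightarrow> Z \<times> [0,n] from a compact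
  space onto a Hausdorff space, hence a homeomorphism, and its inverse yields the
  continuity of p \<mapsto> \<gamma>.  Finally, the 0-dimensional faces are single vertices, so for
  n = 1 no tame path of the boundary reaches 1 from 0.
\<close>

section \<open>Delta-kelleyfication\<close>

lemma istopology_kdelta:
  "istopology (\<lambda>U. U \<subseteq> topspace X \<and>
     (\<forall>p f. continuous_map (simplex_top p) X f \<longrightarrow>
        openin (simplex_top p) {x \<in> standard_simplex p. f x \<in> U}))"
proof -
  have "{x \<in> standard_simplex p. f x \<in> S \<inter> T}
          = {x \<in> standard_simplex p. f x \<in> S} \<inter> {x \<in> standard_simplex p. f x \<in> T}"
       "{x \<in> standard_simplex p. f x \<in> \<Union>\<K>} = (\<Union>S\<in>\<K>. {x \<in> standard_simplex p. f x \<in> S})"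
    for p f S T and \<K> :: "'a set set"
    by auto
  then show ?thesis
    unfolding istopology_def by (auto intro!: openin_Int openin_Union)
qed

lemma openin_kdelta:
  "openin (kdelta X) U \<longleftrightarrow> U \<subseteq> topspace X \<and>
     (\<forall>p f. continuous_map (simplex_top p) X f \<longrightarrow>
        openin (simplex_top p) {x \<in> standard_simplex p. f x \<in> U})"
  unfolding kdelta_def topology_inverse'[OF istopology_kdelta] by (rule refl)

lemma openin_imp_openin_kdelta: "openin X U \<Longrightarrow> openin (kdelta X) U"
  unfolding openin_kdelta
  by (auto dest: openin_subset openin_continuous_map_preimage)

lemma topspace_kdelta [simp]: "topspace (kdelta X) = topspace X"
proof
  show "topspace (kdelta X) \<subseteq> topspace X"
    using openin_kdelta[of X "topspace (kdelta X)"] by simp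
  show "topspace X \<subseteq> topspace (kdelta X)"
    using openin_imp_openin_kdelta[OF openin_topspace[of X]] openin_subset by blast
qed

lemma continuous_map_simplex_kdelta:
  "continuous_map (simplex_top p) (kdelta X) f \<longleftrightarrow> continuous_map (simplex_top p) X f"
proof
  assume "continuous_map (simplex_top p) (kdelta X) f"
  then show "continuous_map (simplex_top p) X f"
    unfolding continuous_map_def using openin_imp_openin_kdelta by (simp, blast)
next
  assume "continuous_map (simplex_top p) X f"
  then show "continuous_map (simplex_top p) (kdelta X) f"
    unfolding continuous_map_def[of _ "kdelta X"] openin_kdelta
    by (simp add: continuous_map_def)
qed

lemma continuous_map_kdeltaI:
  assumes "g \<in> topspace X \<rightarrow> topspace Y"
    and "\<And>p f. continuous_map (simplex_top p) X f \<Longrightarrow> continuous_map (simplex_top p) Y (g \<circ> f)"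
  shows "continuous_map (kdelta X) (kdelta Y) g"
  unfolding continuous_map_def
proof (intro conjI allI impI)
  show "g \<in> topspace (kdelta X) \<rightarrow> topspace (kdelta Y)"
    using assms(1) by simp
  fix U assume U: "openin (kdelta Y) U"
  show "openin (kdelta X) {x \<in> topspace (kdelta X). g x \<in> U}"
    unfolding openin_kdelta
  proof (intro conjI allI impI)
    fix p f assume f: "continuous_map (simplex_top p) X f"
    have "{x \<in> standard_simplex p. f x \<in> {x \<in> topspace (kdelta X). g x \<in> U}}
        = {x \<in> standard_simplex p. (g \<circ> f) x \<in> U}"
      using f by (auto simp: continuous_map_def)
    then show "openin (simplex_top p) {x \<in> standard_simplex p. f x \<in> {x \<in> topspace (kdelta X). g x \<in> U}}"
      using U assms(2)[OF f] unfolding openin_kdelta o_def by simp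
  qed auto
qed

lemma continuous_map_simplex_subtopology_TOP:
  "continuous_map (simplex_top p) (subtopology (TOP X Y) S) f \<longleftrightarrow>
     continuous_map (simplex_top p) (compact_open X Y) f \<and> f ` standard_simplex p \<subseteq> S"
  unfolding TOP_def continuous_map_in_subtopology continuous_map_simplex_kdelta
  by (simp add: image_subset_iff_funcset)

lemma continuous_map_simplex_ksub_TOP:
  "continuous_map (simplex_top p) (ksub (TOP X Y) S) f \<longleftrightarrow>
     continuous_map (simplex_top p) (compact_open X Y) f \<and> f ` standard_simplex p \<subseteq> S"
  unfolding ksub_def continuous_map_simplex_kdelta by (rule continuous_map_simplex_subtopology_TOP)

section \<open>The compact-open topology\<close>

lemma topspace_compact_open [simp]: "topspace (compact_open X Y) = cmaps X Y"
  unfolding compact_open_def topology_generated_by_topspace by auto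

lemma topspace_TOP [simp]: "topspace (TOP X Y) = cmaps X Y"
  unfolding TOP_def by simp

lemma openin_compact_open_subbasic:
  assumes "compactin X K" "openin Y U"
  shows "openin (compact_open X Y) {f \<in> cmaps X Y. f ` K \<subseteq> U}"
  unfolding compact_open_def using assms by (intro topology_generated_by_Basis) blast

lemma continuous_map_compact_open_subbasicI:
  assumes F: "F \<in> topspace Z \<rightarrow> cmaps A B"
    and subbasic: "\<And>K U. compactin A K \<Longrightarrow> openin B U \<Longrightarrow> openin Z {z \<in> topspace Z. F z ` K \<subseteq> U}"
  shows "continuous_map Z (compact_open A B) F"
proof -
  have "openin Z {z \<in> topspace Z. F z \<in> U}" if "openin (compact_open A B) U" for U
  proof -
    from that have "generate_topology_on (insert (cmaps A B)
        {{f \<in> cmaps A B. f ` K \<subseteq> U} | K U. compactin A K \<and> openin B U}) U"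
      unfolding compact_open_def by (rule openin_topology_generated_by)
    then show ?thesis
    proof induction
      case Empty
      then show ?case by simp
    next
      case (Int U V)
      have eq: "{z \<in> topspace Z. F z \<in> U \<inter> V} = {z \<in> topspace Z. F z \<in> U} \<inter> {z \<in> topspace Z. F z \<in> V}"
        by blast
      show ?case
        unfolding eq using Int.IH by (rule openin_Int)
    next
      case (UN \<U>)
      have eq: "{z \<in> topspace Z. F z \<in> \<Union>\<U>} = (\<Union>U\<in>\<U>. {z \<in> topspace Z. F z \<in> U})"
        by blast
      show ?case
        unfolding eq using UN.IH by (intro openin_Union) blast
    next
      case (Basis U)
      then consider "U = cmaps A B"
        | K V where "U = {f \<in> cmaps A B. f ` K \<subseteq> V}" "compactin A K" "openin B V"
        by blast
      then show ?case
      proof cases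
        case 1
        then have "{z \<in> topspace Z. F z \<in> U} = topspace Z"
          using F by blast
        then show ?thesis by simp
      next
        case 2
        then have "{z \<in> topspace Z. F z \<in> U} = {z \<in> topspace Z. F z ` K \<subseteq> V}"
          using F by blast
        then show ?thesis
          using subbasic[OF 2(2,3)] by simp
      qed
    qed
  qed
  then show ?thesis
    unfolding continuous_map_def using F by simp
qed

lemma openin_compact_tube_preimage:
  assumes g: "continuous_map (prod_topology Z A) B g"
    and K: "compactin A K" and V: "openin B V"
  shows "openin Z {z \<in> topspace Z. \<forall>a\<in>K. g (z,a) \<in> V}"
proof (subst openin_subopen, intro ballI)
  fix z0 assume z0: "z0 \<in> {z \<in> topspace Z. \<forall>a\<in>K. g (z,a) \<in> V}"
  define W where "W = {x \<in> topspace (prod_topology Z A). g x \<in> V}"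
  have W: "openin (prod_topology Z A) W"
    unfolding W_def using g V by (rule openin_continuous_map_preimage)
  have "{z0} \<times> K \<subseteq> W"
    using z0 compactin_subset_topspace[OF K] unfolding W_def by auto
  from tube_lemma_right[OF W K _ this]
  obtain U1 V1 where "openin Z U1" "z0 \<in> U1" "K \<subseteq> V1" "U1 \<times> V1 \<subseteq> W"
    using z0 by blast
  moreover have "U1 \<subseteq> topspace Z"
    using \<open>openin Z U1\<close> openin_subset by blast
  ultimately show "\<exists>T. openin Z T \<and> z0 \<in> T \<and> T \<subseteq> {z \<in> topspace Z. \<forall>a\<in>K. g (z,a) \<in> V}"
    unfolding W_def by (intro exI[of _ U1]) auto
qed

lemma continuous_map_compact_open_curry:
  assumes g: "continuous_map (prod_topology Z A) B g"
  shows "continuous_map Z (compact_open A B) (\<lambda>z. restrict (\<lambda>a. g (z,a)) (topspace A))"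
proof (rule continuous_map_compact_open_subbasicI)
  show "(\<lambda>z. restrict (\<lambda>a. g (z,a)) (topspace A)) \<in> topspace Z \<rightarrow> cmaps A B"
  proof
    fix z assume "z \<in> topspace Z"
    then have "continuous_map A B (\<lambda>a. g (z,a))"
      using continuous_map_compose[OF _ g, of A "\<lambda>a. (z,a)"]
      by (simp add: continuous_map_pairwise o_def)
    then show "restrict (\<lambda>a. g (z,a)) (topspace A) \<in> cmaps A B"
      unfolding cmaps_def by (simp add: continuous_map_eq)
  qed
  fix K U assume K: "compactin A K" and U: "openin B U"
  have "{z \<in> topspace Z. restrict (\<lambda>a. g (z,a)) (topspace A) ` K \<subseteq> U}
      = {z \<in> topspace Z. \<forall>a\<in>K. g (z,a) \<in> U}"
    using compactin_subset_topspace[OF K] by (auto simp: image_subset_iff)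
  then show "openin Z {z \<in> topspace Z. restrict (\<lambda>a. g (z,a)) (topspace A) ` K \<subseteq> U}"
    using openin_compact_tube_preimage[OF g K U] by simp
qed

lemma closed_compact_neighbourhood:
  fixes S :: "'a::heine_borel set"
  assumes S: "closed S" and V: "openin (top_of_set S) V" and a: "a \<in> V"
  obtains e where "0 < e" "compactin (top_of_set S) (S \<inter> cball a e)" "S \<inter> cball a e \<subseteq> V"
proof -
  obtain e where e: "0 < e" "ball a e \<inter> S \<subseteq> V"
    using V a unfolding openin_contains_ball by blast
  then have "S \<inter> cball a (e/2) \<subseteq> V"
    by (auto simp: subset_iff)
  moreover have "compactin (top_of_set S) (S \<inter> cball a (e/2))"
    using S by (simp add: compactin_subtopology closed_Int_compact)
  ultimately show ?thesis
    using that[of "e/2"] e(1) by simp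
qed

lemma continuous_map_compact_open_uncurry:
  fixes S :: "'a::heine_borel set"
  assumes F: "continuous_map Z (compact_open (top_of_set S) B) F" and S: "closed S"
  shows "continuous_map (prod_topology Z (top_of_set S)) B (\<lambda>(z,a). F z a)"
proof -
  have F_cmaps: "F z \<in> cmaps (top_of_set S) B" if "z \<in> topspace Z" for z
    using F that unfolding continuous_map_def topspace_compact_open by blast
  have "openin (prod_topology Z (top_of_set S))
      {x \<in> topspace (prod_topology Z (top_of_set S)). (\<lambda>(z,a). F z a) x \<in> U}"
    if U: "openin B U" for U
  proof (subst openin_subopen, intro ballI)
    fix x assume x: "x \<in> {x \<in> topspace (prod_topology Z (top_of_set S)). (\<lambda>(z,a). F z a) x \<in> U}"
    then obtain z0 a0 where x0: "x = (z0,a0)" "z0 \<in> topspace Z" "a0 \<in> S" "F z0 a0 \<in> U"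
      by auto
    have "continuous_map (top_of_set S) B (F z0)"
      using F_cmaps[OF x0(2)] by (simp add: cmaps_def)
    then have "openin (top_of_set S) {a \<in> S. F z0 a \<in> U}"
      using openin_continuous_map_preimage[OF _ U, of "top_of_set S" "F z0"] by simp
    then obtain e where e: "0 < e" and K: "compactin (top_of_set S) (S \<inter> cball a0 e)"
        and KU: "S \<inter> cball a0 e \<subseteq> {a \<in> S. F z0 a \<in> U}"
      using closed_compact_neighbourhood[OF S] x0(3,4) by blast
    define W where "W = {z \<in> topspace Z. F z \<in> {f \<in> cmaps (top_of_set S) B. f ` (S \<inter> cball a0 e) \<subseteq> U}}"
    have "openin Z W"
      unfolding W_def by (rule openin_continuous_map_preimage[OF F openin_compact_open_subbasic[OF K U]])
    moreover have "z0 \<in> W"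
      unfolding W_def using x0(2) F_cmaps[OF x0(2)] KU by auto
    moreover have "openin (top_of_set S) (S \<inter> ball a0 e)"
      by (simp add: openin_open_Int)
    ultimately have "openin (prod_topology Z (top_of_set S)) (W \<times> (S \<inter> ball a0 e))"
      "x \<in> W \<times> (S \<inter> ball a0 e)"
      using x0 e by (auto simp: openin_prod_Times_iff)
    moreover have "W \<times> (S \<inter> ball a0 e)
        \<subseteq> {x \<in> topspace (prod_topology Z (top_of_set S)). (\<lambda>(z,a). F z a) x \<in> U}"
      unfolding W_def by auto
    ultimately show "\<exists>T. openin (prod_topology Z (top_of_set S)) T \<and> x \<in> T \<and>
        T \<subseteq> {x \<in> topspace (prod_topology Z (top_of_set S)). (\<lambda>(z,a). F z a) x \<in> U}"
      by blast
  qed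
  moreover have "(\<lambda>(z,a). F z a) \<in> topspace (prod_topology Z (top_of_set S)) \<rightarrow> topspace B"
    using F_cmaps by (auto simp: cmaps_def continuous_map_def)
  ultimately show ?thesis
    unfolding continuous_map_def by blast
qed

section \<open>Increasing homeomorphisms between intervals\<close>

definition increasing_homeo :: "real \<Rightarrow> real \<Rightarrow> (real \<Rightarrow> real) \<Rightarrow> bool" where
  "increasing_homeo a b f \<longleftrightarrow>
     0 < a \<and> continuous_on {0..a} f \<and> strict_mono_on {0..a} f \<and> f 0 = 0 \<and> f a = b"

lemma increasing_homeo_mono_on: "increasing_homeo a b f \<Longrightarrow> mono_on {0..a} f"
  unfolding increasing_homeo_def by (simp add: strict_mono_on_imp_mono_on)

lemma increasing_homeo_inj_on: "increasing_homeo a b f \<Longrightarrow> inj_on f {0..a}"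
  unfolding increasing_homeo_def by (simp add: strict_mono_on_imp_inj_on)

lemma increasing_homeo_image:
  assumes "increasing_homeo a b f"
  shows "f ` {0..a} = {0..b}"
proof
  have a: "0 < a" and c: "continuous_on {0..a} f" and f0: "f 0 = 0" and fa: "f a = b"
    using assms unfolding increasing_homeo_def by auto
  show "f ` {0..a} \<subseteq> {0..b}"
    using mono_onD[OF increasing_homeo_mono_on[OF assms]] a f0 fa by fastforce
  show "{0..b} \<subseteq> f ` {0..a}"
  proof
    fix y assume "y \<in> {0..b}"
    then obtain x where "0 \<le> x" "x \<le> a" "f x = y"
      using IVT'[of f 0 y a, OF _ _ _ c] f0 fa a by auto
    then show "y \<in> f ` {0..a}" by force
  qed
qed

lemma increasing_homeo_pos: "increasing_homeo a b f \<Longrightarrow> 0 < b"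
  unfolding increasing_homeo_def using strict_mono_onD[of "{0..a}" f 0 a] by auto

lemma increasing_homeo_cong:
  assumes "increasing_homeo a b f" "\<And>t. t \<in> {0..a} \<Longrightarrow> f t = g t"
  shows "increasing_homeo a b g"
proof -
  have "0 \<in> {0..a}" "a \<in> {0..a}"
    using assms(1) unfolding increasing_homeo_def by auto
  then show ?thesis
    using assms continuous_on_eq[of "{0..a}" f g]
    unfolding increasing_homeo_def strict_mono_on_def by metis
qed

lemma increasing_homeo_inverse:
  assumes "increasing_homeo a b f"
  shows "increasing_homeo b a (inv_into {0..a} f)"
proof -
  let ?g = "inv_into {0..a} f"
  note image = increasing_homeo_image[OF assms]
  have g_in: "?g t \<in> {0..a}" and f_g: "f (?g t) = t" if "t \<in> {0..b}" for t
    using that image by (metis inv_into_into, metis f_inv_into_f)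
  have g_f: "?g (f s) = s" if "s \<in> {0..a}" for s
    using increasing_homeo_inj_on[OF assms] that by (rule inv_into_f_f)
  have "continuous_on (f ` {0..a}) ?g"
    using assms continuous_on_inv[of "{0..a}" f] g_f unfolding increasing_homeo_def by auto
  moreover have "strict_mono_on {0..b} ?g"
  proof (rule strict_mono_onI)
    fix r s assume rs: "r \<in> {0..b}" "s \<in> {0..b}" "r < s"
    show "?g r < ?g s"
    proof (rule ccontr)
      assume "\<not> ?g r < ?g s"
      then have "f (?g s) \<le> f (?g r)"
        using mono_onD[OF increasing_homeo_mono_on[OF assms]] g_in rs by simp
      then show False using f_g rs by simp
    qed
  qed
  moreover have "?g 0 = 0" "?g b = a"
    using g_f[of 0] g_f[of a] assms unfolding increasing_homeo_def by auto
  ultimately show ?thesis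
    unfolding increasing_homeo_def using image increasing_homeo_pos[OF assms] by simp
qed

lemma increasing_homeo_compose:
  assumes f: "increasing_homeo a b f" and g: "increasing_homeo b c g"
  shows "increasing_homeo a c (g \<circ> f)"
proof -
  note image = increasing_homeo_image[OF f]
  have "continuous_on {0..a} (g \<circ> f)"
    using f g image continuous_on_compose[of "{0..a}" f g] unfolding increasing_homeo_def by simp
  moreover have "strict_mono_on {0..a} (g \<circ> f)"
  proof (rule strict_mono_onI)
    fix r s assume "r \<in> {0..a}" "s \<in> {0..a}" "r < s"
    moreover from this have "f r \<in> {0..b}" "f s \<in> {0..b}"
      using image by blast+
    moreover have "f r < f s"
      using f \<open>r < s\<close> \<open>r \<in> {0..a}\<close> \<open>s \<in> {0..a}\<close>
      unfolding increasing_homeo_def strict_mono_on_def by blast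
    ultimately show "(g \<circ> f) r < (g \<circ> f) s"
      using g unfolding increasing_homeo_def strict_mono_on_def by simp
  qed
  ultimately show ?thesis
    using f g unfolding increasing_homeo_def by simp
qed

lemma increasing_homeo_scale:
  assumes "0 < a" "0 < b"
  shows "increasing_homeo a b (\<lambda>s. s * (b / a))"
  using assms unfolding increasing_homeo_def strict_mono_on_def
  by (auto intro!: continuous_intros divide_strict_right_mono mult_strict_right_mono)

lemma Gset_iff_increasing_homeo:
  assumes "0 < l"
  shows "\<phi> \<in> Gset l n \<longleftrightarrow> \<phi> \<in> extensional {0..l} \<and> increasing_homeo l (real n) \<phi>"
proof
  assume "\<phi> \<in> Gset l n"
  then have h: "homeomorphic_map (top_of_set {0..l}) (top_of_set {0..real n}) \<phi>"
    and m: "mono_on {0..l} \<phi>" and ext: "\<phi> \<in> extensional {0..l}"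
    unfolding Gset_def by auto
  have image: "\<phi> ` {0..l} = {0..real n}"
    using homeomorphic_imp_surjective_map[OF h] by simp
  have "0 \<in> \<phi> ` {0..l}" "real n \<in> \<phi> ` {0..l}"
    unfolding image by auto
  then obtain s s' where s: "s \<in> {0..l}" "\<phi> s = 0" and s': "s' \<in> {0..l}" "\<phi> s' = real n"
    by (metis imageE)
  have "\<phi> 0 \<le> \<phi> s" "\<phi> s' \<le> \<phi> l"
    using mono_onD[OF m, of 0 s] mono_onD[OF m, of s' l] s s' assms by auto
  moreover have "\<phi> 0 \<in> {0..real n}" "\<phi> l \<in> {0..real n}"
    using image assms by auto
  ultimately have "\<phi> 0 = 0" "\<phi> l = real n"
    using s s' by auto
  moreover have "continuous_on {0..l} \<phi>"
    using homeomorphic_imp_continuous_map[OF h] by simp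
  moreover have "strict_mono_on {0..l} \<phi>"
    using m homeomorphic_imp_injective_map[OF h] by (simp add: mono_imp_strict_mono)
  ultimately show "\<phi> \<in> extensional {0..l} \<and> increasing_homeo l (real n) \<phi>"
    unfolding increasing_homeo_def using ext assms by simp
next
  assume \<phi>: "\<phi> \<in> extensional {0..l} \<and> increasing_homeo l (real n) \<phi>"
  then have image: "\<phi> ` {0..l} = {0..real n}"
    by (simp add: increasing_homeo_image)
  have "homeomorphic_map (top_of_set {0..l}) (top_of_set {0..real n}) \<phi>"
  proof (rule continuous_imp_homeomorphic_map)
    show "continuous_map (top_of_set {0..l}) (top_of_set {0..real n}) \<phi>"
      using \<phi> image unfolding increasing_homeo_def by (auto simp: continuous_map_in_subtopology)
    show "compact_space (top_of_set {0..l})"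
      by (rule compact_space_subtopology) simp
    show "Hausdorff_space (top_of_set {0..real n})"
      by (rule Hausdorff_space_subtopology) simp
  qed (use \<phi> image increasing_homeo_inj_on in auto)
  then show "\<phi> \<in> Gset l n"
    unfolding Gset_def using \<phi> increasing_homeo_mono_on by blast
qed

section \<open>Coordinate sums and d-paths of the cube\<close>

definition coord_sum :: "real^'n::finite \<Rightarrow> real" where
  "coord_sum x = (\<Sum>i\<in>UNIV. x$i)"

text \<open>Stated for 0 and 1 because the simplifier rewrites vec 0 and vec 1 to them.\<close>
lemma coord_sum_0 [simp]: "coord_sum 0 = 0"
  by (simp add: coord_sum_def)

lemma coord_sum_1 [simp]: "coord_sum (1 :: real^'n::finite) = real CARD('n)"
  by (simp add: coord_sum_def)

lemma continuous_on_coord_sum: "continuous_on S f \<Longrightarrow> continuous_on S (\<lambda>x. coord_sum (f x))"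
  unfolding coord_sum_def by (intro continuous_intros)

lemma coord_sum_mono: "(\<And>i. x$i \<le> y$i) \<Longrightarrow> coord_sum x \<le> coord_sum y"
  unfolding coord_sum_def by (intro sum_mono) auto

lemma coord_sum_eq_imp_eq:
  assumes "\<And>i. x$i \<le> y$i" "coord_sum x = coord_sum y"
  shows "x = y"
proof -
  have "(\<Sum>i\<in>UNIV. y$i - x$i) = 0"
    using assms(2) unfolding coord_sum_def by (simp add: sum_subtractf)
  then have "\<forall>i. y$i - x$i = 0"
    using assms(1) by (subst (asm) sum_nonneg_eq_0_iff) auto
  then show ?thesis
    by (simp add: vec_eq_iff)
qed

lemma vec_0_neq_vec_1: "(vec 0 :: real^'n::finite) \<noteq> vec 1"
  by (simp add: vec_eq_iff)

lemma natural_path_iff_coord_sum: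
  assumes "\<gamma> 0 = vec 0" "\<gamma> ` {0..l} \<subseteq> unit_cube"
  shows "natural_path l \<gamma> \<longleftrightarrow> (\<forall>t\<in>{0..l}. coord_sum (\<gamma> t) = t)"
proof -
  have "\<bar>\<gamma> t $ i - \<gamma> 0 $ i\<bar> = \<gamma> t $ i" if "t \<in> {0..l}" for t i
    using assms that by (auto simp: unit_cube_def image_subset_iff)
  then show ?thesis
    unfolding natural_path_def coord_sum_def by simp
qed

lemma strict_mono_on_coord_sum_regular:
  assumes d: "cube_dpath a \<gamma>" and reg: "regular_path a \<gamma>"
  shows "strict_mono_on {0..a} (\<lambda>s. coord_sum (\<gamma> s))"
proof (rule strict_mono_onI)
  have mono: "\<gamma> r $ i \<le> \<gamma> s $ i" if "0 \<le> r" "r \<le> s" "s \<le> a" for r s i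
    using d that unfolding cube_dpath_def by blast
  fix r s assume rs: "r \<in> {0..a}" "s \<in> {0..a}" "r < s"
  show "coord_sum (\<gamma> r) < coord_sum (\<gamma> s)"
  proof (rule ccontr)
    assume not_less: "\<not> coord_sum (\<gamma> r) < coord_sum (\<gamma> s)"
    have le: "\<And>i. \<gamma> r $ i \<le> \<gamma> s $ i"
      using mono rs by simp
    then have "coord_sum (\<gamma> r) = coord_sum (\<gamma> s)"
      using coord_sum_mono[OF le] not_less by linarith
    then have "\<gamma> r = \<gamma> s"
      by (rule coord_sum_eq_imp_eq[OF le])
    have const: "\<gamma> u = \<gamma> r" if u: "u \<in> {r..s}" for u
    proof -
      have "\<gamma> u $ i = \<gamma> r $ i" for i
        using mono[of r u i] mono[of u s i] rs u \<open>\<gamma> r = \<gamma> s\<close> by auto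
      then show ?thesis
        by (simp add: vec_eq_iff)
    qed
    have "\<exists>u\<in>{r..s}. \<gamma> u \<noteq> \<gamma> r"
      using reg rs unfolding regular_path_def by simp
    then show False
      using const by blast
  qed
qed

section \<open>Tame d-paths\<close>

lemma subdivision_mono:
  fixes t :: "nat \<Rightarrow> real"
  assumes "\<forall>j<k. t j \<le> t (Suc j)" "i \<le> j" "j \<le> k"
  shows "t i \<le> t j"
  by (rule lift_Suc_mono_le_ivl[where N="{..<k}"]) (use assms in auto)

lemma subdivision_cover:
  fixes t :: "nat \<Rightarrow> real"
  assumes "\<forall>j<k. t j \<le> t (Suc j)" "0 < k" "t 0 \<le> s" "s \<le> t k"
  shows "\<exists>j<k. t j \<le> s \<and> s \<le> t (Suc j)"
  using assms
proof (induction k)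
  case 0
  then show ?case by simp
next
  case (Suc m)
  show ?case
  proof (cases "s \<le> t m \<and> 0 < m")
    case True
    then obtain j where "j < m" "t j \<le> s" "s \<le> t (Suc j)"
      using Suc.IH Suc.prems by auto
    then show ?thesis
      by (intro exI[of _ j]) auto
  next
    case False
    then show ?thesis
      using Suc.prems by (intro exI[of _ m]) auto
  qed
qed

lemma tame_dpathE:
  assumes "tame_dpath d l \<gamma>"
  obtains k t where "cube_dpath l \<gamma>" "t 0 = 0" "t k = l" "\<forall>j<k. t j \<le> t (Suc j)"
     "\<forall>j\<le>k. \<gamma> (t j) \<in> cube_vertices"
     "\<forall>j<k. \<exists>F \<in> cube_faces d. \<gamma> ` {t j..t (Suc j)} \<subseteq> F"
  using assms unfolding tame_dpath_def by (elim conjE exE) (rule that, assumption+)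

lemma tame_dpathI:
  assumes "cube_dpath l \<gamma>" "t 0 = 0" "t k = l" "\<forall>j<k. t j \<le> t (Suc j)"
     "\<forall>j\<le>k. \<gamma> (t j) \<in> cube_vertices"
     "\<forall>j<k. \<exists>F \<in> cube_faces d. \<gamma> ` {t j..t (Suc j)} \<subseteq> F"
  shows "tame_dpath d l \<gamma>"
  unfolding tame_dpath_def using assms by (intro conjI exI[of _ k] exI[of _ t]) auto

lemma tame_dpath_imp_cube_dpath: "tame_dpath d l \<gamma> \<Longrightarrow> cube_dpath l \<gamma>"
  unfolding tame_dpath_def by blast

lemma tame_dpath_in_face:
  assumes "tame_dpath d l \<gamma>" "0 < l" "s \<in> {0..l}"
  obtains F where "F \<in> cube_faces d" "\<gamma> s \<in> F"
proof -
  obtain k t where t: "t 0 = 0" "t k = l" "\<forall>j<k. t j \<le> t (Suc j)"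
     "\<forall>j<k. \<exists>F \<in> cube_faces d. \<gamma> ` {t j..t (Suc j)} \<subseteq> F"
    using assms(1) by (rule tame_dpathE)
  have "0 < k"
    using t(1,2) assms(2) by (cases k) auto
  then obtain j where "j < k" "s \<in> {t j..t (Suc j)}"
    using subdivision_cover[OF t(3)] t(1,2) assms(3) by auto
  moreover obtain F where "F \<in> cube_faces d" "\<gamma> ` {t j..t (Suc j)} \<subseteq> F"
    using t(4) \<open>j < k\<close> by blast
  ultimately show ?thesis
    using that by blast
qed

lemma cube_faces_subset_unit_cube: "F \<in> cube_faces d \<Longrightarrow> F \<subseteq> unit_cube"
  unfolding cube_faces_def by auto

lemma cube_faces_subset_cube_boundary:
  assumes "F \<in> cube_faces d" "d < CARD('n)"
  shows "F \<subseteq> (cube_boundary :: (real^'n::finite) set)"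
proof -
  obtain I e where F: "F = {x \<in> unit_cube. \<forall>i\<in>I. x$i = e i}" "\<forall>i\<in>I. e i = 0 \<or> e i = 1"
     "card (UNIV - I) \<le> d"
    using assms(1) unfolding cube_faces_def by blast
  have "I \<noteq> {}"
  proof
    assume "I = {}"
    then show False
      using F(3) assms(2) by simp
  qed
  then obtain i where i: "i \<in> I" by blast
  show ?thesis
  proof
    fix x assume "x \<in> F"
    then have "x \<in> unit_cube" "x$i = 0 \<or> x$i = 1"
      using F i by auto
    then show "x \<in> cube_boundary"
      unfolding cube_boundary_def by blast
  qed
qed

lemma tame_dpath_cong:
  assumes "tame_dpath d l f" "\<And>t. t \<in> {0..l} \<Longrightarrow> f t = g t"
  shows "tame_dpath d l g"
proof -
  obtain k t where t: "cube_dpath l f" "t 0 = 0" "t k = l" "\<forall>j<k. t j \<le> t (Suc j)"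
     "\<forall>j\<le>k. f (t j) \<in> cube_vertices"
     "\<forall>j<k. \<exists>F \<in> cube_faces d. f ` {t j..t (Suc j)} \<subseteq> F"
    using assms(1) by (rule tame_dpathE)
  have "continuous_on {0..l} g"
    using t(1) assms(2) continuous_on_eq[of "{0..l}" f g] unfolding cube_dpath_def by blast
  moreover have "g ` {0..l} \<subseteq> unit_cube"
    using t(1) assms(2) unfolding cube_dpath_def by auto
  moreover have "g s $ i \<le> g s' $ i" if "0 \<le> s" "s \<le> s'" "s' \<le> l" for s s' i
  proof -
    have "f s $ i \<le> f s' $ i"
      using t(1) that unfolding cube_dpath_def by blast
    then show ?thesis
      using assms(2)[of s] assms(2)[of s'] that by simp
  qed
  ultimately have g: "cube_dpath l g"
    unfolding cube_dpath_def by blast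
  have t_in: "t j \<in> {0..l}" if "j \<le> k" for j
    using subdivision_mono[OF t(4), of 0 j] subdivision_mono[OF t(4), of j k] that t(2,3) by auto
  have "\<forall>j\<le>k. g (t j) \<in> cube_vertices"
    using t(5) t_in assms(2) by simp
  moreover have "\<forall>j<k. \<exists>F \<in> cube_faces d. g ` {t j..t (Suc j)} \<subseteq> F"
  proof (intro allI impI)
    fix j assume "j < k"
    then have "{t j..t (Suc j)} \<subseteq> {0..l}"
      using t_in[of j] t_in[of "Suc j"] by auto
    then have "g ` {t j..t (Suc j)} = f ` {t j..t (Suc j)}"
      using assms(2) by (intro image_cong) auto
    then show "\<exists>F \<in> cube_faces d. g ` {t j..t (Suc j)} \<subseteq> F"
      using t(6) \<open>j < k\<close> by auto
  qed
  ultimately show ?thesis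
    by (rule tame_dpathI[OF g t(2-4)])
qed

lemma cube_dpath_compose:
  assumes \<gamma>: "cube_dpath b \<gamma>" and h: "increasing_homeo a b h"
  shows "cube_dpath a (\<gamma> \<circ> h)"
proof -
  have h_in: "h s \<in> {0..b}" if "s \<in> {0..a}" for s
    using increasing_homeo_image[OF h] that by blast
  have "continuous_on {0..a} (\<gamma> \<circ> h)"
  proof (rule continuous_on_compose)
    show "continuous_on {0..a} h"
      using h by (simp add: increasing_homeo_def)
    show "continuous_on (h ` {0..a}) \<gamma>"
      using \<gamma> by (simp add: increasing_homeo_image[OF h] cube_dpath_def)
  qed
  moreover have "(\<gamma> \<circ> h) ` {0..a} \<subseteq> unit_cube"
    using \<gamma> h_in unfolding cube_dpath_def by (auto simp: image_subset_iff)
  moreover have "(\<gamma> \<circ> h) s $ i \<le> (\<gamma> \<circ> h) s' $ i" if "0 \<le> s" "s \<le> s'" "s' \<le> a" for s s' i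
  proof -
    have "h s \<le> h s'" "0 \<le> h s" "h s' \<le> b"
      using mono_onD[OF increasing_homeo_mono_on[OF h], of s s'] h_in[of s] h_in[of s'] that
      by auto
    then show ?thesis
      using \<gamma> unfolding cube_dpath_def by simp
  qed
  ultimately show ?thesis
    unfolding cube_dpath_def by blast
qed

lemma increasing_homeo_image_inverse_interval:
  assumes h: "increasing_homeo a b h" and uv: "u \<in> {0..b}" "v \<in> {0..b}"
  shows "h ` {inv_into {0..a} h u..inv_into {0..a} h v} \<subseteq> {u..v}"
proof
  let ?g = "inv_into {0..a} h"
  fix y assume "y \<in> h ` {?g u..?g v}"
  then obtain x where x: "x \<in> {?g u..?g v}" "y = h x"
    by blast
  have "u \<in> h ` {0..a}" "v \<in> h ` {0..a}"
    using increasing_homeo_image[OF h] uv by simp_all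
  then have g_in: "?g u \<in> {0..a}" "?g v \<in> {0..a}" and h_g: "h (?g u) = u" "h (?g v) = v"
    by (meson inv_into_into, meson inv_into_into, simp_all add: f_inv_into_f)
  then have "x \<in> {0..a}"
    using x(1) by auto
  then have "h (?g u) \<le> h x" "h x \<le> h (?g v)"
    using mono_onD[OF increasing_homeo_mono_on[OF h]] g_in x(1) by auto
  then show "y \<in> {u..v}"
    using h_g x(2) by simp
qed

text \<open>The subdivision is pulled back along the inverse homeomorphism.\<close>
lemma tame_dpath_compose:
  assumes tame: "tame_dpath d b \<gamma>" and h: "increasing_homeo a b h"
  shows "tame_dpath d a (\<gamma> \<circ> h)"
proof -
  define g where "g = inv_into {0..a} h"
  have g: "increasing_homeo b a g"
    unfolding g_def using h by (rule increasing_homeo_inverse)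
  have h_g: "h (g s) = s" if "s \<in> {0..b}" for s
    using increasing_homeo_image[OF h] that unfolding g_def by (simp add: f_inv_into_f)
  obtain k t where t: "cube_dpath b \<gamma>" "t 0 = 0" "t k = b" "\<forall>j<k. t j \<le> t (Suc j)"
     "\<forall>j\<le>k. \<gamma> (t j) \<in> cube_vertices"
     "\<forall>j<k. \<exists>F \<in> cube_faces d. \<gamma> ` {t j..t (Suc j)} \<subseteq> F"
    using tame by (rule tame_dpathE)
  have t_in: "t j \<in> {0..b}" if "j \<le> k" for j
    using subdivision_mono[OF t(4), of 0 j] subdivision_mono[OF t(4), of j k] that t(2,3) by auto
  have ends: "(g \<circ> t) 0 = 0" "(g \<circ> t) k = a"
    using g t(2,3) unfolding increasing_homeo_def by simp_all
  have steps: "\<forall>j<k. (g \<circ> t) j \<le> (g \<circ> t) (Suc j)"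
  proof (intro allI impI)
    fix j assume "j < k"
    then show "(g \<circ> t) j \<le> (g \<circ> t) (Suc j)"
      using mono_onD[OF increasing_homeo_mono_on[OF g], of "t j" "t (Suc j)"]
        t_in[of j] t_in[of "Suc j"] t(4) by simp
  qed
  have vertices: "\<forall>j\<le>k. (\<gamma> \<circ> h) ((g \<circ> t) j) \<in> cube_vertices"
    using t(5) t_in h_g by simp
  have faces: "\<forall>j<k. \<exists>F \<in> cube_faces d. (\<gamma> \<circ> h) ` {(g \<circ> t) j..(g \<circ> t) (Suc j)} \<subseteq> F"
  proof (intro allI impI)
    fix j assume j: "j < k"
    have "(\<gamma> \<circ> h) ` {(g \<circ> t) j..(g \<circ> t) (Suc j)} \<subseteq> \<gamma> ` {t j..t (Suc j)}"
      using increasing_homeo_image_inverse_interval[OF h t_in[of j] t_in[of "Suc j"]] j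
      unfolding g_def by (auto simp: image_comp[symmetric])
    moreover obtain F where "F \<in> cube_faces d" "\<gamma> ` {t j..t (Suc j)} \<subseteq> F"
      using t(6) j by blast
    ultimately show "\<exists>F \<in> cube_faces d. (\<gamma> \<circ> h) ` {(g \<circ> t) j..(g \<circ> t) (Suc j)} \<subseteq> F"
      by blast
  qed
  show ?thesis
    by (rule tame_dpathI[OF cube_dpath_compose[OF t(1) h] ends steps vertices faces])
qed

text \<open>Faces of dimension 0 are single vertices.\<close>
lemma tame_dpath_0_const:
  fixes \<gamma> :: "real \<Rightarrow> real^'n::finite"
  assumes "tame_dpath 0 l \<gamma>"
  shows "\<gamma> l = \<gamma> 0"
proof -
  obtain k t where t: "t 0 = 0" "t k = l" "\<forall>j<k. t j \<le> t (Suc j)"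
     "\<forall>j<k. \<exists>F \<in> cube_faces 0. \<gamma> ` {t j..t (Suc j)} \<subseteq> F"
    using assms by (rule tame_dpathE)
  have singleton: "x = y" if F: "F \<in> cube_faces 0" and xy: "x \<in> F" "y \<in> F"
    for F and x y :: "real^'n"
  proof -
    obtain I e where "F = {x \<in> unit_cube. \<forall>i\<in>I. x$i = e i}" "card (UNIV - I) \<le> 0"
      using F unfolding cube_faces_def by blast
    moreover from this have "\<forall>i. i \<in> I"
      by auto
    ultimately show ?thesis
      using xy by (simp add: vec_eq_iff)
  qed
  have "\<gamma> (t j) = \<gamma> (t 0)" if "j \<le> k" for j
    using that
  proof (induction j)
    case (Suc j)
    then have "j < k"
      by simp
    then obtain F where F: "F \<in> cube_faces 0" "\<gamma> ` {t j..t (Suc j)} \<subseteq> F"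
      using t(4) by blast
    have "t j \<le> t (Suc j)"
      using t(3) \<open>j < k\<close> by blast
    then have "\<gamma> (t j) \<in> F" "\<gamma> (t (Suc j)) \<in> F"
      using F(2) by auto
    then show ?case
      using singleton[OF F(1)] Suc by (metis Suc_leD)
  qed simp
  then show ?thesis
    using t(1,2) by (metis order_refl)
qed

section \<open>Factoring execution paths into a reparametrisation and a natural path\<close>

definition arclength :: "real \<Rightarrow> (real \<Rightarrow> real^'n::finite) \<Rightarrow> real \<Rightarrow> real" where
  "arclength l p = restrict (\<lambda>t. coord_sum (p t)) {0..l}"

definition naturalize :: "real \<Rightarrow> (real \<Rightarrow> real^'n::finite) \<Rightarrow> real \<Rightarrow> real^'n" where
  "naturalize l p =
     restrict (\<lambda>t. p (inv_into {0..l} (\<lambda>s. coord_sum (p s)) t)) {0..real CARD('n)}"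

lemma coord_sum_Nset:
  fixes \<gamma> :: "real \<Rightarrow> real^'n::finite"
  assumes "\<gamma> \<in> Nset d" "t \<in> {0..real CARD('n)}"
  shows "coord_sum (\<gamma> t) = t"
proof -
  have "cube_dpath (real CARD('n)) \<gamma>"
    using assms(1) tame_dpath_imp_cube_dpath unfolding Nset_def by blast
  then show ?thesis
    using assms natural_path_iff_coord_sum[of \<gamma> "real CARD('n)"]
    unfolding Nset_def cube_dpath_def by blast
qed

lemma increasing_homeo_coord_sum_exec_path:
  fixes \<gamma> :: "real \<Rightarrow> real^'n::finite"
  assumes "\<gamma> \<in> exec_paths d"
  shows "increasing_homeo 1 (real CARD('n)) (\<lambda>s. coord_sum (\<gamma> s))"
proof -
  have d: "cube_dpath 1 \<gamma>" and r: "regular_path 1 \<gamma>" and "\<gamma> 0 = vec 0" "\<gamma> 1 = vec 1"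
    using assms tame_dpath_imp_cube_dpath unfolding exec_paths_def by auto
  moreover have "continuous_on {0..1} (\<lambda>s. coord_sum (\<gamma> s))"
    using d unfolding cube_dpath_def by (simp add: continuous_on_coord_sum)
  ultimately show ?thesis
    unfolding increasing_homeo_def using strict_mono_on_coord_sum_regular[OF d r] by simp
qed

lemma PsetE:
  assumes "p \<in> Pset l d"
  obtains g where "g \<in> exec_paths d" "p = restrict (\<lambda>t. g (t / l)) {0..l}"
  using assms unfolding Pset_def by blast

lemma increasing_homeo_coord_sum_Pset:
  fixes p :: "real \<Rightarrow> real^'n::finite"
  assumes l: "0 < l" and p: "p \<in> Pset l d"
  shows "increasing_homeo l (real CARD('n)) (\<lambda>s. coord_sum (p s))"
proof -
  obtain g where g: "g \<in> exec_paths d" "p = restrict (\<lambda>t. g (t / l)) {0..l}"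
    using p by (rule PsetE)
  have "increasing_homeo l (real CARD('n)) ((\<lambda>s. coord_sum (g s)) \<circ> (\<lambda>s. s * (1 / l)))"
    using increasing_homeo_scale[of l 1] increasing_homeo_coord_sum_exec_path[OF g(1)] l
    by (intro increasing_homeo_compose) auto
  then show ?thesis
    by (rule increasing_homeo_cong) (simp add: g(2))
qed

lemma reparam_in_Pset:
  fixes \<gamma> :: "real \<Rightarrow> real^'n::finite"
  assumes l: "0 < l" and \<phi>: "\<phi> \<in> Gset l CARD('n)" and \<gamma>: "\<gamma> \<in> Nset d"
  shows "reparam l (\<phi>, \<gamma>) \<in> Pset l d"
proof -
  define h where "h = \<phi> \<circ> (\<lambda>s. s * l)"
  have h: "increasing_homeo 1 (real CARD('n)) h"
    unfolding h_def using increasing_homeo_scale[of 1 l, simplified] \<phi> l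
    by (intro increasing_homeo_compose) (auto simp: Gset_iff_increasing_homeo)
  define g where "g = \<gamma> \<circ> h"
  have "tame_dpath d 1 g"
    unfolding g_def using \<gamma> h unfolding Nset_def by (blast intro: tame_dpath_compose)
  moreover have "regular_path 1 g"
    unfolding regular_path_def
  proof (intro allI impI)
    fix a b :: real assume ab: "0 \<le> a \<and> a < b \<and> b \<le> 1"
    have "h a < h b"
      using h ab unfolding increasing_homeo_def by (auto intro: strict_mono_onD)
    moreover have "h a \<in> {0..real CARD('n)}" "h b \<in> {0..real CARD('n)}"
      using increasing_homeo_image[OF h] ab by auto
    ultimately have "g b \<noteq> g a"
      unfolding g_def using coord_sum_Nset[OF \<gamma>] by (metis comp_apply less_irrefl)
    then show "\<exists>t\<in>{a..b}. g t \<noteq> g a"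
      using ab by auto
  qed
  moreover have "g 0 = vec 0" "g 1 = vec 1"
    using h \<gamma> unfolding g_def increasing_homeo_def Nset_def by auto
  moreover from this have "\<exists>s t. 0 \<le> s \<and> s \<le> 1 \<and> 0 \<le> t \<and> t \<le> 1 \<and> g s \<noteq> g t"
    using vec_0_neq_vec_1 by (metis order_refl zero_le_one)
  ultimately have "g \<in> exec_paths d"
    unfolding exec_paths_def by blast
  moreover have "reparam l (\<phi>, \<gamma>) = restrict (\<lambda>t. g (t / l)) {0..l}"
    unfolding reparam_def g_def h_def prod.case using l by (intro restrict_ext) simp
  ultimately show ?thesis
    unfolding Pset_def by blast
qed

lemma arclength_in_Gset:
  fixes p :: "real \<Rightarrow> real^'n::finite"
  assumes l: "0 < l" and p: "p \<in> Pset l d"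
  shows "arclength l p \<in> Gset l CARD('n)"
proof -
  have "increasing_homeo l (real CARD('n)) (arclength l p)"
    using increasing_homeo_coord_sum_Pset[OF l p]
    by (rule increasing_homeo_cong) (simp add: arclength_def)
  then show ?thesis
    using l by (simp add: Gset_iff_increasing_homeo arclength_def)
qed

lemma naturalize_in_Nset:
  fixes p :: "real \<Rightarrow> real^'n::finite"
  assumes l: "0 < l" and p: "p \<in> Pset l d"
  shows "naturalize l p \<in> Nset d"
proof -
  obtain g where g: "g \<in> exec_paths d" "p = restrict (\<lambda>t. g (t / l)) {0..l}"
    using p by (rule PsetE)
  define q where "q = (\<lambda>s. coord_sum (p s))"
  have q: "increasing_homeo l (real CARD('n)) q"
    unfolding q_def using l p by (rule increasing_homeo_coord_sum_Pset)
  define \<iota> where "\<iota> = inv_into {0..l} q"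
  have \<iota>_in: "\<iota> t \<in> {0..l}" and q_\<iota>: "q (\<iota> t) = t" if "t \<in> {0..real CARD('n)}" for t
    using increasing_homeo_image[OF q] that unfolding \<iota>_def by (metis inv_into_into, metis f_inv_into_f)
  define h where "h = (\<lambda>s. s * (1 / l)) \<circ> \<iota>"
  have h: "increasing_homeo (real CARD('n)) 1 h"
    unfolding h_def \<iota>_def using increasing_homeo_inverse[OF q] increasing_homeo_scale[of l 1] l
    by (intro increasing_homeo_compose) auto
  have naturalize_eq: "naturalize l p t = (g \<circ> h) t" if "t \<in> {0..real CARD('n)}" for t
    using that \<iota>_in[OF that] g(2) unfolding naturalize_def h_def \<iota>_def q_def by simp
  have "tame_dpath d (real CARD('n)) (g \<circ> h)"
    using g(1) h unfolding exec_paths_def by (blast intro: tame_dpath_compose)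
  then have tame: "tame_dpath d (real CARD('n)) (naturalize l p)"
    by (rule tame_dpath_cong) (simp add: naturalize_eq)
  have ends: "naturalize l p 0 = vec 0" "naturalize l p (real CARD('n)) = vec 1"
    using naturalize_eq[of 0] naturalize_eq[of "real CARD('n)"] h g(1)
    unfolding increasing_homeo_def exec_paths_def by simp_all
  have "naturalize l p ` {0..real CARD('n)} \<subseteq> unit_cube"
    using tame_dpath_imp_cube_dpath[OF tame] unfolding cube_dpath_def by blast
  moreover have "coord_sum (naturalize l p t) = t" if "t \<in> {0..real CARD('n)}" for t
    using that q_\<iota>[OF that] unfolding naturalize_def \<iota>_def q_def by simp
  ultimately have "natural_path (real CARD('n)) (naturalize l p)"
    using natural_path_iff_coord_sum[of "naturalize l p" "real CARD('n)"] ends(1) by blast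
  with tame ends show ?thesis
    unfolding Nset_def by (simp add: naturalize_def)
qed

lemma reparam_arclength_naturalize:
  fixes p :: "real \<Rightarrow> real^'n::finite"
  assumes l: "0 < l" and p: "p \<in> Pset l d"
  shows "reparam l (arclength l p, naturalize l p) = p"
proof -
  obtain g where g: "g \<in> exec_paths d" "p = restrict (\<lambda>t. g (t / l)) {0..l}"
    using p by (rule PsetE)
  define q where "q = (\<lambda>s. coord_sum (p s))"
  have q: "increasing_homeo l (real CARD('n)) q"
    unfolding q_def using l p by (rule increasing_homeo_coord_sum_Pset)
  have "(naturalize l p \<circ> arclength l p) s = p s" if "s \<in> {0..l}" for s
  proof -
    have "q s \<in> {0..real CARD('n)}"
      using increasing_homeo_image[OF q] that by blast
    moreover have "inv_into {0..l} q (q s) = s"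
      using increasing_homeo_inj_on[OF q] that by (rule inv_into_f_f)
    ultimately show ?thesis
      using that unfolding naturalize_def arclength_def q_def by simp
  qed
  then show ?thesis
    unfolding reparam_def g(2) by (auto intro: restrict_ext simp: g(2))
qed

lemma arclength_reparam:
  fixes \<gamma> :: "real \<Rightarrow> real^'n::finite"
  assumes l: "0 < l" and \<phi>: "\<phi> \<in> Gset l CARD('n)" and \<gamma>: "\<gamma> \<in> Nset d"
  shows "arclength l (reparam l (\<phi>, \<gamma>)) = \<phi>"
proof (rule extensionalityI)
  have "\<phi> ` {0..l} = {0..real CARD('n)}"
    using \<phi> l by (simp add: Gset_iff_increasing_homeo increasing_homeo_image)
  then show "arclength l (reparam l (\<phi>, \<gamma>)) t = \<phi> t" if "t \<in> {0..l}" for t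
  proof -
    have "\<phi> t \<in> {0..real CARD('n)}"
      using \<open>\<phi> ` {0..l} = {0..real CARD('n)}\<close> that by blast
    then show ?thesis
      using coord_sum_Nset[OF \<gamma>, of "\<phi> t"] that by (simp add: arclength_def reparam_def)
  qed
next
  show "\<phi> \<in> extensional {0..l}"
    using \<phi> unfolding Gset_def by blast
qed (simp add: arclength_def)

lemma naturalize_reparam:
  fixes \<gamma> :: "real \<Rightarrow> real^'n::finite"
  assumes l: "0 < l" and \<phi>: "\<phi> \<in> Gset l CARD('n)" and \<gamma>: "\<gamma> \<in> Nset d"
  shows "naturalize l (reparam l (\<phi>, \<gamma>)) = \<gamma>"
proof (rule extensionalityI)
  have \<phi>_hom: "increasing_homeo l (real CARD('n)) \<phi>"
    using \<phi> l by (simp add: Gset_iff_increasing_homeo)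
  fix t assume t: "t \<in> {0..real CARD('n)}"
  then have "t \<in> \<phi> ` {0..l}"
    using increasing_homeo_image[OF \<phi>_hom] by simp
  then obtain s where s: "s \<in> {0..l}" "\<phi> s = t"
    by blast
  have sum: "coord_sum (reparam l (\<phi>, \<gamma>) r) = \<phi> r" if "r \<in> {0..l}" for r
  proof -
    have "\<phi> r \<in> {0..real CARD('n)}"
      using increasing_homeo_image[OF \<phi>_hom] that by blast
    then show ?thesis
      using coord_sum_Nset[OF \<gamma>] that by (simp add: reparam_def)
  qed
  have "inj_on (\<lambda>r. coord_sum (reparam l (\<phi>, \<gamma>) r)) {0..l}"
    using increasing_homeo_inj_on[OF \<phi>_hom] sum by (subst inj_on_cong) auto
  then have "inv_into {0..l} (\<lambda>r. coord_sum (reparam l (\<phi>, \<gamma>) r)) t = s"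
    by (rule inv_into_f_eq[OF _ s(1)]) (use sum[OF s(1)] s(2) in simp)
  then show "naturalize l (reparam l (\<phi>, \<gamma>)) t = \<gamma> t"
    using t s by (simp add: naturalize_def reparam_def)
next
  show "\<gamma> \<in> extensional {0..real CARD('n)}"
    using \<gamma> unfolding Nset_def by blast
qed (simp add: naturalize_def)

lemma Nset_0_empty: "(Nset 0 :: (real \<Rightarrow> real^'n::finite) set) = {}"
proof -
  have False if "\<gamma> \<in> (Nset 0 :: (real \<Rightarrow> real^'n) set)" for \<gamma>
  proof -
    have "tame_dpath 0 (real CARD('n)) \<gamma>" "\<gamma> 0 = vec 0" "\<gamma> (real CARD('n)) = vec 1"
      using that unfolding Nset_def by blast+
    then show False
      using tame_dpath_0_const[of "real CARD('n)" \<gamma>] vec_0_neq_vec_1 by simp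
  qed
  then show ?thesis
    by blast
qed

lemma PtopSet_0_empty: "(PtopSet 0 :: (real \<Rightarrow> real^'n::finite) set) = {}"
proof -
  have False if "\<gamma> \<in> (exec_paths 0 :: (real \<Rightarrow> real^'n) set)" for \<gamma>
  proof -
    have "tame_dpath 0 1 \<gamma>" "\<gamma> 0 = vec 0" "\<gamma> 1 = vec 1"
      using that unfolding exec_paths_def by blast+
    then show False
      using tame_dpath_0_const[of 1 \<gamma>] vec_0_neq_vec_1 by simp
  qed
  then show ?thesis
    unfolding PtopSet_def by blast
qed

section \<open>Continuity of the factorisation\<close>

lemma Gset_subset_cmaps: "Gset l n \<subseteq> cmaps (top_of_set {0..l}) (top_of_set {0..real n})"
proof
  fix \<phi> assume "\<phi> \<in> Gset l n"
  then have "\<phi> \<in> extensional {0..l}"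
    and "continuous_map (top_of_set {0..l}) (top_of_set {0..real n}) \<phi>"
    unfolding Gset_def by (blast dest: homeomorphic_imp_continuous_map)+
  then show "\<phi> \<in> cmaps (top_of_set {0..l}) (top_of_set {0..real n})"
    unfolding cmaps_def by simp
qed

lemma Nset_subset_cmaps:
  "(Nset d :: (real \<Rightarrow> real^'n::finite) set)
     \<subseteq> cmaps (top_of_set {0..real CARD('n)}) (top_of_set unit_cube)"
proof
  fix \<gamma> :: "real \<Rightarrow> real^'n" assume \<gamma>: "\<gamma> \<in> Nset d"
  then have "cube_dpath (real CARD('n)) \<gamma>"
    unfolding Nset_def by (blast dest: tame_dpath_imp_cube_dpath)
  then have "continuous_map (top_of_set {0..real CARD('n)}) (top_of_set unit_cube) \<gamma>"
    unfolding cube_dpath_def by (simp add: continuous_map_in_subtopology image_subset_iff_funcset)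
  then show "\<gamma> \<in> cmaps (top_of_set {0..real CARD('n)}) (top_of_set unit_cube)"
    using \<gamma> unfolding cmaps_def Nset_def by simp
qed

lemma Pset_subset_cmaps:
  fixes K :: "(real^'n::finite) set"
  assumes l: "0 < l" and K: "\<Union>(cube_faces d) \<subseteq> K"
  shows "Pset l d \<subseteq> cmaps (top_of_set {0..l}) (top_of_set K)"
proof
  fix p :: "real \<Rightarrow> real^'n" assume "p \<in> Pset l d"
  then obtain g where g: "g \<in> exec_paths d" "p = restrict (\<lambda>t. g (t / l)) {0..l}"
    by (rule PsetE)
  have tame: "tame_dpath d 1 g"
    using g(1) unfolding exec_paths_def by blast
  have scale: "(\<lambda>t. t / l) ` {0..l} \<subseteq> {0..1}"
    using l by (auto simp: field_simps)
  have "continuous_on {0..1} g"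
    using tame_dpath_imp_cube_dpath[OF tame] unfolding cube_dpath_def by blast
  then have "continuous_on {0..l} (\<lambda>t. g (t / l))"
    by (rule continuous_on_compose2[OF _ _ scale]) (use l in \<open>auto intro!: continuous_intros\<close>)
  then have "continuous_on {0..l} p"
    by (rule continuous_on_eq) (simp add: g(2))
  moreover have "p t \<in> K" if "t \<in> {0..l}" for t
  proof -
    have "t / l \<in> {0..1}"
      using scale that by blast
    then obtain F where "F \<in> cube_faces d" "g (t / l) \<in> F"
      by (rule tame_dpath_in_face[OF tame zero_less_one])
    then have "g (t / l) \<in> K"
      using K by blast
    then show ?thesis
      using g(2) that by simp
  qed
  ultimately have "continuous_map (top_of_set {0..l}) (top_of_set K) p"
    by (auto simp: continuous_map_in_subtopology)
  then show "p \<in> cmaps (top_of_set {0..l}) (top_of_set K)"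
    unfolding cmaps_def using g(2) by simp
qed

lemma topspace_ksub_TOP: "topspace (ksub (TOP X Y) S) = cmaps X Y \<inter> S"
  unfolding ksub_def by simp

lemma topspace_Gtop: "topspace (Gtop l n) = Gset l n"
  unfolding Gtop_def topspace_ksub_TOP using Gset_subset_cmaps by blast

lemma topspace_Ntop: "topspace (Ntop d :: (real \<Rightarrow> real^'n::finite) topology) = Nset d"
  unfolding Ntop_def topspace_ksub_TOP using Nset_subset_cmaps by blast

lemma topspace_Ptop:
  fixes K :: "(real^'n::finite) set"
  assumes "0 < l" "\<Union>(cube_faces d) \<subseteq> K"
  shows "topspace (Ptop l d K) = Pset l d"
  unfolding Ptop_def topspace_ksub_TOP using Pset_subset_cmaps[OF assms] by blast

lemma continuous_map_compact_open_reparam: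
  fixes \<Gamma> :: "'z \<Rightarrow> real \<Rightarrow> real^'n::finite" and K :: "(real^'n) set"
  assumes l: "0 < l" and K: "\<Union>(cube_faces d) \<subseteq> K"
    and \<Phi>: "continuous_map Z (compact_open (top_of_set {0..l}) (top_of_set {0..real CARD('n)})) \<Phi>"
    and \<Phi>_in: "\<Phi> ` topspace Z \<subseteq> Gset l CARD('n)"
    and \<Gamma>: "continuous_map Z (compact_open (top_of_set {0..real CARD('n)}) (top_of_set unit_cube)) \<Gamma>"
    and \<Gamma>_in: "\<Gamma> ` topspace Z \<subseteq> Nset d"
  shows "continuous_map Z (compact_open (top_of_set {0..l}) (top_of_set K)) (\<lambda>z. reparam l (\<Phi> z, \<Gamma> z))"
proof -
  let ?ZI = "prod_topology Z (top_of_set {0..l})"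
  have \<Phi>_joint: "continuous_map ?ZI (top_of_set {0..real CARD('n)}) (\<lambda>(z,a). \<Phi> z a)"
    using continuous_map_compact_open_uncurry[OF \<Phi>] by simp
  have \<Gamma>_joint: "continuous_map (prod_topology Z (top_of_set {0..real CARD('n)})) (top_of_set unit_cube)
      (\<lambda>(z,t). \<Gamma> z t)"
    using continuous_map_compact_open_uncurry[OF \<Gamma>] by simp
  have "continuous_map ?ZI (prod_topology Z (top_of_set {0..real CARD('n)}))
      (\<lambda>x. (fst x, (\<lambda>(z,a). \<Phi> z a) x))"
    using \<Phi>_joint continuous_map_fst by (simp add: continuous_map_paired)
  then have "continuous_map ?ZI (top_of_set unit_cube) ((\<lambda>(z,t). \<Gamma> z t) \<circ> (\<lambda>x. (fst x, (\<lambda>(z,a). \<Phi> z a) x)))"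
    using \<Gamma>_joint by (rule continuous_map_compose)
  moreover have "(\<lambda>(z,t). \<Gamma> z t) \<circ> (\<lambda>x. (fst x, (\<lambda>(z,a). \<Phi> z a) x)) = (\<lambda>(z,a). \<Gamma> z (\<Phi> z a))"
    by (auto simp: fun_eq_iff)
  ultimately have joint: "continuous_map ?ZI (top_of_set unit_cube) (\<lambda>(z,a). \<Gamma> z (\<Phi> z a))"
    by simp
  have "\<Gamma> z (\<Phi> z a) \<in> K" if "z \<in> topspace Z" "a \<in> {0..l}" for z a
  proof -
    have "increasing_homeo l (real CARD('n)) (\<Phi> z)"
      using \<Phi>_in that(1) l by (auto simp: Gset_iff_increasing_homeo)
    then have "\<Phi> z a \<in> {0..real CARD('n)}"
      using increasing_homeo_image that(2) by blast
    moreover have "tame_dpath d (real CARD('n)) (\<Gamma> z)"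
      using \<Gamma>_in that(1) unfolding Nset_def by blast
    ultimately obtain F where "F \<in> cube_faces d" "\<Gamma> z (\<Phi> z a) \<in> F"
      by (metis tame_dpath_in_face of_nat_0_less_iff zero_less_card_finite)
    then show ?thesis
      using K by blast
  qed
  then have "continuous_map ?ZI (top_of_set K) (\<lambda>(z,a). \<Gamma> z (\<Phi> z a))"
    using joint by (auto simp: continuous_map_in_subtopology)
  from continuous_map_compact_open_curry[OF this]
  show ?thesis
    by (simp add: reparam_def o_def)
qed

lemma continuous_map_coord_sum_family:
  fixes P :: "'z \<Rightarrow> real \<Rightarrow> real^'n::finite" and K :: "(real^'n) set"
  assumes l: "0 < l"
    and P: "continuous_map Z (compact_open (top_of_set {0..l}) (top_of_set K)) P"
    and P_in: "P ` topspace Z \<subseteq> Pset l d"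
  shows "continuous_map (prod_topology Z (top_of_set {0..l})) (top_of_set {0..real CARD('n)})
           (\<lambda>(z,a). coord_sum (P z a))"
proof -
  have "continuous_map (prod_topology Z (top_of_set {0..l})) (top_of_set K) (\<lambda>(z,a). P z a)"
    using continuous_map_compact_open_uncurry[OF P] by simp
  then have "continuous_map (prod_topology Z (top_of_set {0..l})) euclidean (\<lambda>(z,a). P z a)"
    by (simp add: continuous_map_in_subtopology)
  moreover have "continuous_map euclidean euclidean (coord_sum :: real^'n \<Rightarrow> real)"
    using continuous_on_coord_sum[OF continuous_on_id] by simp
  ultimately have "continuous_map (prod_topology Z (top_of_set {0..l})) euclidean
      (coord_sum \<circ> (\<lambda>(z,a). P z a))"
    by (rule continuous_map_compose)
  moreover have "coord_sum \<circ> (\<lambda>(z,a). P z a) = (\<lambda>(z,a). coord_sum (P z a))"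
    by (auto simp: fun_eq_iff)
  moreover have "coord_sum (P z a) \<in> {0..real CARD('n)}" if "z \<in> topspace Z" "a \<in> {0..l}" for z a
    using increasing_homeo_image[OF increasing_homeo_coord_sum_Pset[OF l]] P_in that by blast
  ultimately show ?thesis
    by (auto simp: continuous_map_in_subtopology)
qed

lemma continuous_map_compact_open_arclength:
  fixes P :: "'z \<Rightarrow> real \<Rightarrow> real^'n::finite" and K :: "(real^'n) set"
  assumes l: "0 < l"
    and P: "continuous_map Z (compact_open (top_of_set {0..l}) (top_of_set K)) P"
    and P_in: "P ` topspace Z \<subseteq> Pset l d"
  shows "continuous_map Z (compact_open (top_of_set {0..l}) (top_of_set {0..real CARD('n)}))
           (\<lambda>z. arclength l (P z))"
  using continuous_map_compact_open_curry[OF continuous_map_coord_sum_family[OF assms]]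
  by (simp add: arclength_def)

lemma homeomorphic_map_fibrewise:
  assumes Z: "compact_space Z" "Hausdorff_space Z"
    and Q: "continuous_map (prod_topology Z (top_of_set {0..a})) (top_of_set {0..b}) Q"
    and inc: "\<And>z. z \<in> topspace Z \<Longrightarrow> increasing_homeo a b (\<lambda>s. Q (z,s))"
  shows "homeomorphic_map (prod_topology Z (top_of_set {0..a})) (prod_topology Z (top_of_set {0..b}))
           (\<lambda>x. (fst x, Q x))"
    (is "homeomorphic_map ?A ?B ?H")
proof (rule continuous_imp_homeomorphic_map)
  show "continuous_map ?A ?B ?H"
    using Q by (simp add: continuous_map_paired continuous_map_fst)
  show "compact_space ?A"
    using Z(1) by (simp add: compact_space_prod_topology compact_space_subtopology)
  show "Hausdorff_space ?B"
    using Z(2) by (simp add: Hausdorff_space_prod_topology Hausdorff_space_subtopology)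
  have "{0..b} = (\<lambda>s. Q (z,s)) ` {0..a}" if "z \<in> topspace Z" for z
    using increasing_homeo_image[OF inc[OF that]] by simp
  then show "?H ` topspace ?A = topspace ?B"
    by (auto simp: image_iff)
  show "inj_on ?H (topspace ?A)"
  proof (rule inj_onI)
    fix x y assume "x \<in> topspace ?A" "y \<in> topspace ?A" "?H x = ?H y"
    then obtain z s s' where "x = (z,s)" "y = (z,s')" "z \<in> topspace Z"
        "s \<in> {0..a}" "s' \<in> {0..a}" "Q (z,s) = Q (z,s')"
      by (cases x, cases y) auto
    then show "x = y"
      using inj_onD[OF increasing_homeo_inj_on[OF inc]] by simp
  qed
qed

text \<open>Compactness of the base is essential: it makes the fibrewise map a continuous
  bijection from a compact space onto a Hausdorff space.\<close>
lemma continuous_map_fibrewise_inverse: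
  assumes Z: "compact_space Z" "Hausdorff_space Z"
    and Q: "continuous_map (prod_topology Z (top_of_set {0..a})) (top_of_set {0..b}) Q"
    and inc: "\<And>z. z \<in> topspace Z \<Longrightarrow> increasing_homeo a b (\<lambda>s. Q (z,s))"
  shows "continuous_map (prod_topology Z (top_of_set {0..b})) (prod_topology Z (top_of_set {0..a}))
           (\<lambda>(z,t). (z, inv_into {0..a} (\<lambda>s. Q (z,s)) t))"
proof -
  let ?A = "prod_topology Z (top_of_set {0..a})" and ?B = "prod_topology Z (top_of_set {0..b})"
  obtain G where "homeomorphic_maps ?A ?B (\<lambda>x. (fst x, Q x)) G"
    using homeomorphic_map_fibrewise[OF assms] by (auto simp: homeomorphic_map_maps)
  then have G: "continuous_map ?B ?A G" and H_G: "\<And>y. y \<in> topspace ?B \<Longrightarrow> (fst (G y), Q (G y)) = y"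
    unfolding homeomorphic_maps_def by auto
  have "G y = (\<lambda>(z,t). (z, inv_into {0..a} (\<lambda>s. Q (z,s)) t)) y" if y: "y \<in> topspace ?B" for y
  proof -
    obtain z t where zt: "y = (z,t)" "z \<in> topspace Z"
      using y by auto
    have "G y \<in> topspace ?A"
      using continuous_map_image_subset_topspace[OF G] y by blast
    then obtain s where s: "G y = (z,s)" "s \<in> {0..a}" "Q (z,s) = t"
      using H_G[OF y] zt by (cases "G y") auto
    then have "inv_into {0..a} (\<lambda>s. Q (z,s)) t = s"
      using increasing_homeo_inj_on[OF inc[OF zt(2)]] by (simp add: inv_into_f_eq)
    then show ?thesis
      using s zt by simp
  qed
  then show ?thesis
    by (rule continuous_map_eq[OF G])
qed

lemma continuous_map_compact_open_naturalize:
  fixes P :: "'z \<Rightarrow> real \<Rightarrow> real^'n::finite" and K :: "(real^'n) set"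
  assumes l: "0 < l" and K: "K \<subseteq> unit_cube"
    and P: "continuous_map Z (compact_open (top_of_set {0..l}) (top_of_set K)) P"
    and P_in: "P ` topspace Z \<subseteq> Pset l d"
    and Z: "compact_space Z" "Hausdorff_space Z"
  shows "continuous_map Z (compact_open (top_of_set {0..real CARD('n)}) (top_of_set unit_cube))
           (\<lambda>z. naturalize l (P z))"
proof -
  let ?inv = "\<lambda>(z,t). (z, inv_into {0..l} (\<lambda>s. coord_sum (P z s)) t)"
  have "continuous_map (prod_topology Z (top_of_set {0..real CARD('n)}))
      (prod_topology Z (top_of_set {0..l})) ?inv"
    using continuous_map_fibrewise_inverse[OF Z continuous_map_coord_sum_family[OF l P P_in]]
      increasing_homeo_coord_sum_Pset[OF l] P_in by auto
  moreover have "continuous_map (prod_topology Z (top_of_set {0..l})) (top_of_set unit_cube)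
      (\<lambda>(z,a). P z a)"
    using continuous_map_compact_open_uncurry[OF P] K
    by (simp add: continuous_map_in_subtopology) blast
  ultimately have "continuous_map (prod_topology Z (top_of_set {0..real CARD('n)})) (top_of_set unit_cube)
      ((\<lambda>(z,a). P z a) \<circ> ?inv)"
    by (rule continuous_map_compose)
  from continuous_map_compact_open_curry[OF this]
  show ?thesis
    by (simp add: naturalize_def o_def case_prod_beta)
qed

lemma continuous_map_simplex_Gtop_Ntop:
  "continuous_map (simplex_top p) (prod_topology (Gtop l n) (Ntop d :: (real \<Rightarrow> real^'n::finite) topology)) u
   \<longleftrightarrow> continuous_map (simplex_top p) (compact_open (top_of_set {0..l}) (top_of_set {0..real n})) (fst \<circ> u)
     \<and> (fst \<circ> u) ` standard_simplex p \<subseteq> Gset l n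
     \<and> continuous_map (simplex_top p)
         (compact_open (top_of_set {0..real CARD('n)}) (top_of_set unit_cube)) (snd \<circ> u)
     \<and> (snd \<circ> u) ` standard_simplex p \<subseteq> Nset d"
  unfolding continuous_map_pairwise Gtop_def Ntop_def continuous_map_simplex_ksub_TOP by blast

lemma continuous_map_reparam:
  fixes K :: "(real^'n::finite) set"
  assumes l: "0 < l" and K: "\<Union>(cube_faces d) \<subseteq> K"
  shows "continuous_map (kprod (Gtop l CARD('n)) (Ntop d)) (Ptop l d K) (reparam l)"
  unfolding kprod_def Ptop_def ksub_def
proof (rule continuous_map_kdeltaI)
  show "reparam l \<in> topspace (prod_topology (Gtop l CARD('n)) (Ntop d))
      \<rightarrow> topspace (subtopology (TOP (top_of_set {0..l}) (top_of_set K)) (Pset l d))"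
    using reparam_in_Pset[OF l, where d=d] Pset_subset_cmaps[OF l K]
    by (auto simp: topspace_Gtop topspace_Ntop)
  fix p and u :: "(nat \<Rightarrow> real) \<Rightarrow> (real \<Rightarrow> real) \<times> (real \<Rightarrow> real^'n)"
  assume "continuous_map (simplex_top p) (prod_topology (Gtop l CARD('n)) (Ntop d)) u"
  then have u: "continuous_map (simplex_top p)
        (compact_open (top_of_set {0..l}) (top_of_set {0..real CARD('n)})) (fst \<circ> u)"
      "(fst \<circ> u) ` standard_simplex p \<subseteq> Gset l CARD('n)"
      "continuous_map (simplex_top p)
        (compact_open (top_of_set {0..real CARD('n)}) (top_of_set unit_cube)) (snd \<circ> u)"
      "(snd \<circ> u) ` standard_simplex p \<subseteq> Nset d"
    unfolding continuous_map_simplex_Gtop_Ntop by blast+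
  have "continuous_map (simplex_top p) (compact_open (top_of_set {0..l}) (top_of_set K)) (reparam l \<circ> u)"
    using continuous_map_compact_open_reparam[OF l K u(1) _ u(3)] u(2,4) by (simp add: o_def)
  moreover have "(reparam l \<circ> u) ` standard_simplex p \<subseteq> Pset l d"
    using reparam_in_Pset[OF l] u(2,4) by fastforce
  ultimately show "continuous_map (simplex_top p)
      (subtopology (TOP (top_of_set {0..l}) (top_of_set K)) (Pset l d)) (reparam l \<circ> u)"
    unfolding continuous_map_simplex_subtopology_TOP by blast
qed

lemma continuous_map_arclength_naturalize:
  fixes K :: "(real^'n::finite) set"
  assumes l: "0 < l" and K: "K \<subseteq> unit_cube"
  shows "continuous_map (Ptop l d K) (kprod (Gtop l CARD('n)) (Ntop d))
           (\<lambda>p. (arclength l p, naturalize l p))"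
  unfolding kprod_def Ptop_def ksub_def
proof (rule continuous_map_kdeltaI)
  show "(\<lambda>p. (arclength l p, naturalize l p))
      \<in> topspace (subtopology (TOP (top_of_set {0..l}) (top_of_set K)) (Pset l d))
        \<rightarrow> topspace (prod_topology (Gtop l CARD('n)) (Ntop d))"
    using arclength_in_Gset[OF l] naturalize_in_Nset[OF l]
    by (auto simp: topspace_Gtop topspace_Ntop)
  fix p and u :: "(nat \<Rightarrow> real) \<Rightarrow> real \<Rightarrow> real^'n"
  assume "continuous_map (simplex_top p) (subtopology (TOP (top_of_set {0..l}) (top_of_set K)) (Pset l d)) u"
  then have u: "continuous_map (simplex_top p) (compact_open (top_of_set {0..l}) (top_of_set K)) u"
      "u ` standard_simplex p \<subseteq> Pset l d"
    unfolding continuous_map_simplex_subtopology_TOP by blast+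
  have simplex: "compact_space (simplex_top p)" "Hausdorff_space (simplex_top p)"
    by (simp_all add: compact_space_subtopology compactin_standard_simplex
        Hausdorff_space_subtopology Hausdorff_space_product_topology)
  have "(\<lambda>z. arclength l (u z)) ` standard_simplex p \<subseteq> Gset l CARD('n)"
    "(\<lambda>z. naturalize l (u z)) ` standard_simplex p \<subseteq> Nset d"
    using u(2) arclength_in_Gset[OF l, where d=d] naturalize_in_Nset[OF l, where d=d] by auto
  then show "continuous_map (simplex_top p) (prod_topology (Gtop l CARD('n)) (Ntop d))
      ((\<lambda>p. (arclength l p, naturalize l p)) \<circ> u)"
    unfolding continuous_map_simplex_Gtop_Ntop
    using continuous_map_compact_open_arclength[OF l u(1)]
      continuous_map_compact_open_naturalize[OF l K u(1) _ simplex] u(2)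
    by (simp add: o_def)
qed

lemma homeomorphic_map_reparam:
  fixes K :: "(real^'n::finite) set"
  assumes l: "0 < l" and faces: "\<Union>(cube_faces d) \<subseteq> K" and K: "K \<subseteq> unit_cube"
  shows "homeomorphic_map (kprod (Gtop l CARD('n)) (Ntop d)) (Ptop l d K) (reparam l)"
proof -
  have "topspace (kprod (Gtop l CARD('n)) (Ntop d :: (real \<Rightarrow> real^'n) topology))
      = Gset l CARD('n) \<times> Nset d"
    unfolding kprod_def by (simp add: topspace_Gtop topspace_Ntop)
  note top = this
  have "homeomorphic_maps (kprod (Gtop l CARD('n)) (Ntop d)) (Ptop l d K) (reparam l)
      (\<lambda>p. (arclength l p, naturalize l p))"
    unfolding homeomorphic_maps_def
  proof (intro conjI ballI)
    show "continuous_map (kprod (Gtop l CARD('n)) (Ntop d)) (Ptop l d K) (reparam l)"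
      using l faces by (rule continuous_map_reparam)
    show "continuous_map (Ptop l d K) (kprod (Gtop l CARD('n)) (Ntop d))
        (\<lambda>p. (arclength l p, naturalize l p))"
      using l K by (rule continuous_map_arclength_naturalize)
  next
    fix x assume "x \<in> topspace (kprod (Gtop l CARD('n)) (Ntop d :: (real \<Rightarrow> real^'n) topology))"
    then obtain \<phi> \<gamma> where x: "x = (\<phi>, \<gamma>)" and \<phi>: "\<phi> \<in> Gset l CARD('n)" and \<gamma>: "\<gamma> \<in> Nset d"
      unfolding top by blast
    then show "(\<lambda>p. (arclength l p, naturalize l p)) (reparam l x) = x"
      using arclength_reparam[OF l \<phi> \<gamma>] naturalize_reparam[OF l \<phi> \<gamma>] by simp
  next
    fix p assume "p \<in> topspace (Ptop l d K)"
    then show "reparam l (arclength l p, naturalize l p) = p"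
      using topspace_Ptop[OF l faces] reparam_arclength_naturalize[OF l] by simp
  qed
  then show ?thesis
    by (auto simp: homeomorphic_map_maps)
qed

lemma PtopTop_eq_Ptop: "PtopTop d K = Ptop 1 d K"
  unfolding PtopTop_def Ptop_def PtopSet_def Pset_def by simp

theorem proposition5p5:
  fixes l :: real
  assumes "l > 0"
  shows "homeomorphic_map (kprod (Gtop l CARD('n)) (Ntop CARD('n)))
            (Ptop l CARD('n) (unit_cube :: (real^'n::finite) set)) (reparam l)
       \<and> homeomorphic_map (kprod (Gtop l CARD('n)) (Ntop (CARD('n) - 1)))
            (Ptop l (CARD('n) - 1) (cube_boundary :: (real^'n::finite) set)) (reparam l)
       \<and> homeomorphic_map (kprod (Gtop 1 CARD('n)) (Ntop CARD('n)))
            (PtopTop CARD('n) (unit_cube :: (real^'n::finite) set)) (reparam 1)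
       \<and> homeomorphic_map (kprod (Gtop 1 CARD('n)) (Ntop (CARD('n) - 1)))
            (PtopTop (CARD('n) - 1) (cube_boundary :: (real^'n::finite) set)) (reparam 1)
       \<and> (CARD('n) = 1 \<longrightarrow> (Nset 0 :: (real \<Rightarrow> real^'n) set) = {} \<and>
            (PtopSet 0 :: (real \<Rightarrow> real^'n) set) = {})"
proof -
  have cube: "\<Union>(cube_faces CARD('n)) \<subseteq> (unit_cube :: (real^'n) set)"
    using cube_faces_subset_unit_cube by blast
  have "CARD('n) - 1 < CARD('n)"
    by simp
  then have boundary: "\<Union>(cube_faces (CARD('n) - 1)) \<subseteq> (cube_boundary :: (real^'n) set)"
    using cube_faces_subset_cube_boundary by blast
  have "(cube_boundary :: (real^'n) set) \<subseteq> unit_cube"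
    unfolding cube_boundary_def by blast
  then show ?thesis
    using homeomorphic_map_reparam[OF assms cube order_refl]
      homeomorphic_map_reparam[OF assms boundary]
      homeomorphic_map_reparam[OF zero_less_one cube order_refl]
      homeomorphic_map_reparam[OF zero_less_one boundary]
      Nset_0_empty[where 'n='n] PtopSet_0_empty[where 'n='n]
    by (simp add: PtopTop_eq_Ptop)
qed

end
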